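(* For $\sigma>0$ and $\mu\in\mathbb{R}$ with $|\mu|\ge r(\sigma)$, we have $q_\sigma(\mu)\ge\frac14\sigma\,\ell_{exp}(\mu)>0$.
   Context: $\ell_{exp}(t)=\exp(-|t|)$. For $\sigma\ge0$, $g_\sigma(\mu)=\mathbb{E}_{Z\sim\mathcal{N}(0,1)}[\ell_{exp}(\mu+\sigma Z)]$ and $q_\sigma(\mu)=\frac{\partial}{\partial\sigma}g_\sigma(\mu)$. The function $r(\sigma)=\sigma^2+\sigma\sqrt{2\log\frac{4\sqrt2}{\sqrt\pi\sigma}}$ for $0<\sigma\le\frac{4\sqrt2}{\sqrt\pi}$ and $r(\sigma)=2\sigma^2$ for $\sigma>\frac{4\sqrt2}{\sqrt\pi}$. *)

theory Defs
  imports "HOL-Probability.Probability"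
begin

definition l_exp :: "real \<Rightarrow> real" where
  "l_exp t = exp (- \<bar>t\<bar>)"

definition g :: "real \<Rightarrow> real \<Rightarrow> real" where
  "g \<sigma> \<mu> = (\<integral>z. std_normal_density z * l_exp (\<mu> + \<sigma> * z) \<partial>lborel)"

definition q :: "real \<Rightarrow> real \<Rightarrow> real" where
  "q \<sigma> \<mu> = deriv (\<lambda>s. g s \<mu>) \<sigma>"

definition r :: "real \<Rightarrow> real" where
  "r \<sigma> = (if \<sigma> \<le> 4 * sqrt 2 / sqrt pi
            then \<sigma>\<^sup>2 + \<sigma> * sqrt (2 * ln (4 * sqrt 2 / (sqrt pi * \<sigma>)))
            else 2 * \<sigma>\<^sup>2)"

end

theory Submission
  imports Defs
begin

text \<open>Splitting the expectation at the kink of l_exp and completing the square gives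
  g \<sigma> \<mu> = exp (\<sigma>^2/2 - \<mu>) \<Psi> (\<sigma> - \<mu>/\<sigma>) + exp (\<sigma>^2/2 + \<mu>) \<Psi> (\<sigma> + \<mu>/\<sigma>), where \<Psi> is the
  standard normal tail, and differentiating in \<sigma> gives q \<sigma> \<mu> = \<sigma> g \<sigma> \<mu> - 2 \<phi> (\<mu>/\<sigma>).
  Put K = exp (\<sigma>^2/2 - |\<mu>|). Since r \<sigma> \<ge> \<sigma>^2, the tail \<Psi> (\<sigma> - |\<mu>|/\<sigma>) is at least 1/2, so
  g \<sigma> \<mu> \<ge> K/2; and \<phi> (\<mu>/\<sigma>) = K \<phi> (\<sigma> - |\<mu>|/\<sigma>) \<le> \<sigma> K/8 is exactly what the threshold r \<sigma>
  is chosen for. Hence q \<sigma> \<mu> \<ge> \<sigma> K/4 \<ge> \<sigma> exp (-|\<mu>|)/4.\<close>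

lemma has_bochner_integral_lborel_real_affine_iff:
  fixes f :: "real \<Rightarrow> 'a :: {banach, second_countable_topology}"
  assumes "c \<noteq> 0"
  shows "has_bochner_integral lborel f i \<longleftrightarrow>
    has_bochner_integral lborel (\<lambda>x. f (t + c * x)) (i /\<^sub>R \<bar>c\<bar>)"
  using assms unfolding has_bochner_integral_iff
  by (simp add: lborel_integrable_real_affine_iff lborel_integral_real_affine[symmetric, of c]
      divideR_right cong: conj_cong)

lemma std_normal_density_minus: "std_normal_density (- x) = std_normal_density x"
  by (simp add: std_normal_density_def)

lemma std_normal_density_mult_exp:
  "std_normal_density z * exp (a * z) = exp (a\<^sup>2 / 2) * std_normal_density (z - a)"
proof -
  have "- z\<^sup>2 / 2 + a * z = a\<^sup>2 / 2 + - (z - a)\<^sup>2 / 2"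
    by (simp add: power2_eq_square field_simps)
  then have "exp (- z\<^sup>2 / 2) * exp (a * z) = exp (a\<^sup>2 / 2) * exp (- (z - a)\<^sup>2 / 2)"
    by (metis exp_add)
  then show ?thesis
    unfolding std_normal_density_def by (metis mult.assoc mult.left_commute)
qed

definition std_normal_tail :: "real \<Rightarrow> real" where
  "std_normal_tail t = (\<integral>x. indicator {t<..} x * std_normal_density x \<partial>lborel)"

lemma integrable_indicator_std_normal_density:
  "A \<in> sets borel \<Longrightarrow> integrable lborel (\<lambda>x. indicator A x * std_normal_density x)"
  using integrable_mult_indicator[of A lborel std_normal_density] by simp

lemma has_bochner_integral_std_normal_tail:
  "has_bochner_integral lborel (\<lambda>x. indicator {t<..} x * std_normal_density x) (std_normal_tail t)"
  unfolding std_normal_tail_def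
  by (simp add: has_bochner_integral_iff integrable_indicator_std_normal_density)

lemma std_normal_tail_nonneg: "0 \<le> std_normal_tail t"
  unfolding std_normal_tail_def by (intro integral_nonneg_AE) (auto simp: indicator_def)

lemma std_normal_tail_antimono: "t \<le> u \<Longrightarrow> std_normal_tail u \<le> std_normal_tail t"
  unfolding std_normal_tail_def
  by (intro integral_mono integrable_indicator_std_normal_density) (auto simp: indicator_def)

lemma std_normal_tail_0: "std_normal_tail 0 = 1 / 2"
proof -
  have left: "(\<integral>x. indicator {..<0} x * std_normal_density x \<partial>lborel) = std_normal_tail 0"
    unfolding std_normal_tail_def
    by (subst lborel_integral_real_affine[where c = "-1" and t = 0])
       (auto intro!: Bochner_Integration.integral_cong simp: std_normal_density_minus
         split: split_indicator)
  have "1 = (\<integral>x. std_normal_density x \<partial>lborel)" by simp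
  also have "\<dots> = (\<integral>x. indicator {0<..} x * std_normal_density x
      + indicator {..<0} x * std_normal_density x \<partial>lborel)"
    by (rule integral_cong_AE)
       (auto intro!: eventually_mono[OF AE_lborel_singleton[of 0]] split: split_indicator)
  also have "\<dots> = 2 * std_normal_tail 0"
    by (subst Bochner_Integration.integral_add)
       (auto intro!: integrable_indicator_std_normal_density simp: left std_normal_tail_def)
  finally show ?thesis by simp
qed

lemma std_normal_tail_has_real_derivative:
  "(std_normal_tail has_real_derivative - std_normal_density t) (at t)"
proof -
  let ?F = "\<lambda>u. LBINT x=ereal 0..ereal u. std_normal_density x"
  have "std_normal_tail u = std_normal_tail 0 - ?F u" for u
  proof -
    have "?F u + (LBINT x=ereal u..\<infinity>. std_normal_density x)
        = (LBINT x=ereal 0..\<infinity>. std_normal_density x)"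
      by (rule interval_integral_sum)
         (auto simp: interval_lebesgue_integrable_def set_integrable_def
           intro!: integrable_indicator_std_normal_density)
    then show ?thesis
      by (simp add: std_normal_tail_def interval_integral_Ioi set_lebesgue_integral_def
          zero_ereal_def)
  qed
  then have tail_eq: "std_normal_tail = (\<lambda>u. std_normal_tail 0 - ?F u)"
    by blast
  define a where "a = min 0 t - 1"
  define b where "b = max 0 t + 1"
  have "continuous_on UNIV std_normal_density"
    unfolding std_normal_density_def by (intro continuous_intros) auto
  then have "(?F has_vector_derivative std_normal_density t) (at t within {a..b})"
    by (intro interval_integral_FTC2) (auto simp: a_def b_def intro: continuous_on_subset)
  moreover have "at t within {a..b} = at t"
    by (rule at_within_Icc_at) (auto simp: a_def b_def)
  ultimately have "(?F has_real_derivative std_normal_density t) (at t)"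
    by (simp add: has_real_derivative_iff_has_vector_derivative)
  then show ?thesis
    by (subst tail_eq) (auto intro!: derivative_eq_intros)
qed

lemma std_normal_tail_has_real_derivative_chain [derivative_intros]:
  "(f has_real_derivative f') (at x within S) \<Longrightarrow>
    ((\<lambda>x. std_normal_tail (f x)) has_real_derivative - std_normal_density (f x) * f')
      (at x within S)"
  using DERIV_chain2[OF std_normal_tail_has_real_derivative] by blast

lemma borel_measurable_l_exp [measurable]: "l_exp \<in> borel_measurable borel"
  unfolding l_exp_def by measurable

lemma std_normal_density_mult_l_exp:
  assumes "s > 0" and "z \<noteq> - m / s"
  shows "std_normal_density z * l_exp (m + s * z)
    = exp (s\<^sup>2 / 2 - m) * (indicator {- m / s<..} z * std_normal_density (s + z))
      + exp (s\<^sup>2 / 2 + m) * (indicator {..< - m / s} z * std_normal_density (s - z))"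
proof (cases "z > - m / s")
  case True
  have "std_normal_density z * l_exp (m + s * z)
      = exp (- m) * (std_normal_density z * exp ((- s) * z))"
    using True assms by (simp add: l_exp_def field_simps mult_exp_exp)
  also have "\<dots> = exp (- m) * exp (s\<^sup>2 / 2) * std_normal_density (s + z)"
    using std_normal_density_mult_exp[of z "- s"] by (simp add: add.commute)
  also have "\<dots> = exp (s\<^sup>2 / 2 - m) * std_normal_density (s + z)"
    by (simp add: mult_exp_exp)
  finally show ?thesis
    using True by simp
next
  case False
  then have "z < - m / s" using assms(2) by simp
  have "std_normal_density z * l_exp (m + s * z) = exp m * (std_normal_density z * exp (s * z))"
    using \<open>z < - m / s\<close> assms by (simp add: l_exp_def field_simps mult_exp_exp)
  also have "\<dots> = exp (s\<^sup>2 / 2 + m) * std_normal_density (s - z)"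
    using std_normal_density_minus[of "z - s"]
    by (simp add: std_normal_density_mult_exp exp_add)
  finally show ?thesis
    using \<open>z < - m / s\<close> by simp
qed

lemma g_eq_std_normal_tail:
  assumes "s > 0"
  shows "g s m = exp (s\<^sup>2 / 2 - m) * std_normal_tail (s - m / s)
    + exp (s\<^sup>2 / 2 + m) * std_normal_tail (s + m / s)"
proof -
  have right: "has_bochner_integral lborel
      (\<lambda>z. indicator {- m / s<..} z * std_normal_density (s + z)) (std_normal_tail (s - m / s))"
    using has_bochner_integral_std_normal_tail[of "s - m / s"]
    by (subst (asm) has_bochner_integral_lborel_real_affine_iff[where c = 1 and t = s])
       (auto elim!: has_bochner_integral_cong[THEN iffD1, rotated 3] split: split_indicator)
  have left: "has_bochner_integral lborel
      (\<lambda>z. indicator {..< - m / s} z * std_normal_density (s - z)) (std_normal_tail (s + m / s))"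
    using has_bochner_integral_std_normal_tail[of "s + m / s"]
    by (subst (asm) has_bochner_integral_lborel_real_affine_iff[where c = "-1" and t = s])
       (auto elim!: has_bochner_integral_cong[THEN iffD1, rotated 3] split: split_indicator)
  have "has_bochner_integral lborel (\<lambda>z. std_normal_density z * l_exp (m + s * z))
      (exp (s\<^sup>2 / 2 - m) * std_normal_tail (s - m / s)
        + exp (s\<^sup>2 / 2 + m) * std_normal_tail (s + m / s))"
    using has_bochner_integral_add[OF has_bochner_integral_mult_right[OF right]
        has_bochner_integral_mult_right[OF left]]
  proof (rule has_bochner_integral_cong_AE[THEN iffD1, rotated 3])
    show "AE z in lborel. exp (s\<^sup>2 / 2 - m) * (indicator {- m / s<..} z * std_normal_density (s + z))
        + exp (s\<^sup>2 / 2 + m) * (indicator {..< - m / s} z * std_normal_density (s - z))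
      = std_normal_density z * l_exp (m + s * z)"
      using AE_lborel_singleton[of "- m / s"]
      by eventually_elim (metis std_normal_density_mult_l_exp[OF assms])
  qed auto
  then show ?thesis
    unfolding g_def by (rule has_bochner_integral_integral_eq)
qed

lemma exp_mult_std_normal_density_shift:
  assumes "s \<noteq> 0"
  shows "exp (s\<^sup>2 / 2 - m) * std_normal_density (s - m / s) = std_normal_density (m / s)"
proof -
  have "std_normal_density (m / s) * exp m = exp (s\<^sup>2 / 2) * std_normal_density (s - m / s)"
    using std_normal_density_mult_exp[of "m / s" s] std_normal_density_minus[of "m / s - s"] assms
    by simp
  then show ?thesis
    unfolding exp_diff by (simp add: field_simps)
qed

lemma q_eq_g:
  assumes "s > 0"
  shows "q s m = s * g s m - 2 * std_normal_density (m / s)"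
proof -
  define G where "G t = exp (t\<^sup>2 / 2 - m) * std_normal_tail (t - m / t)
      + exp (t\<^sup>2 / 2 + m) * std_normal_tail (t + m / t)" for t
  have shift_minus: "std_normal_density (s - m / s) * exp (s\<^sup>2 / 2 - m) = std_normal_density (m / s)"
    and shift_plus: "std_normal_density (s + m / s) * exp (m + s\<^sup>2 / 2) = std_normal_density (m / s)"
    using exp_mult_std_normal_density_shift[of s m] exp_mult_std_normal_density_shift[of s "- m"]
      std_normal_density_minus[of "m / s"] assms by (simp_all add: mult.commute add.commute)
  \<comment> \<open>The two tail derivatives contribute \<open>\<phi>(m/s) (1 \<plusminus> m/s\<^sup>2)\<close>; the \<open>m/s\<^sup>2\<close> parts cancel.\<close>
  have "(G has_real_derivative s * G s - 2 * std_normal_density (m / s)) (at s)"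
    unfolding G_def using assms
    by (auto intro!: derivative_eq_intros) (simp add: algebra_simps shift_minus shift_plus)
  then have "((\<lambda>t. g t m) has_real_derivative s * G s - 2 * std_normal_density (m / s)) (at s)"
    by (rule has_field_derivative_transform_within_open[of _ _ _ "{0<..}"])
       (use assms in \<open>auto simp: G_def g_eq_std_normal_tail\<close>)
  then show ?thesis
    unfolding q_def using assms by (simp add: DERIV_imp_deriv G_def g_eq_std_normal_tail)
qed

lemma sq_le_r:
  assumes "s > 0"
  shows "s\<^sup>2 \<le> r s"
proof (cases "s \<le> 4 * sqrt 2 / sqrt pi")
  case True
  then have "0 \<le> ln (4 * sqrt 2 / (sqrt pi * s))"
    using assms by (simp add: field_simps)
  then show ?thesis
    using True assms unfolding r_def by simp
qed (simp add: r_def)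

lemma std_normal_density_le_if_r_le:
  assumes "s > 0" and "r s \<le> m"
  shows "std_normal_density (s - m / s) \<le> s / 8"
proof -
  define c where "c = 4 * sqrt 2 / sqrt pi"
  have c_pos: "c > 0" and c_sqrt: "sqrt (2 * pi) * c = 8"
    unfolding c_def by (simp_all add: real_sqrt_mult field_simps)
  have "exp (- (s - m / s)\<^sup>2 / 2) \<le> s / c"
  proof (cases "s \<le> c")
    case True
    define L where "L = ln (c / s)"
    have L_nonneg: "0 \<le> L"
      unfolding L_def using True assms by simp
    have "s * sqrt (2 * L) \<le> m - s\<^sup>2"
      using assms(2) True unfolding r_def L_def c_def by (simp add: field_simps)
    then have "sqrt (2 * L) \<le> m / s - s"
      using assms(1) by (simp add: field_simps power2_eq_square)
    then have "2 * L \<le> (s - m / s)\<^sup>2"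
      using L_nonneg power_mono[of "sqrt (2 * L)" "m / s - s" 2] by (simp add: power2_commute)
    then have "exp (- (s - m / s)\<^sup>2 / 2) \<le> exp (- L)"
      by simp
    also have "exp (- L) = s / c"
      unfolding L_def using assms(1) c_pos by (simp add: ln_div exp_diff)
    finally show ?thesis .
  next
    case False
    have "exp (- (s - m / s)\<^sup>2 / 2) \<le> 1"
      by simp
    also have "1 \<le> s / c"
      using False c_pos by simp
    finally show ?thesis .
  qed
  then have "exp (- (s - m / s)\<^sup>2 / 2) / sqrt (2 * pi) \<le> s / c / sqrt (2 * pi)"
    by (rule divide_right_mono) simp
  then have "std_normal_density (s - m / s) \<le> s / c / sqrt (2 * pi)"
    by (simp add: std_normal_density_def)
  also have "\<dots> = s / 8"
    using c_sqrt by (simp add: field_simps)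
  finally show ?thesis .
qed

lemma g_lower_bound:
  assumes "s > 0" and "s\<^sup>2 \<le> \<bar>m\<bar>"
  shows "exp (s\<^sup>2 / 2 - \<bar>m\<bar>) / 2 \<le> g s m"
proof -
  have "s - \<bar>m\<bar> / s \<le> 0"
    using assms by (simp add: field_simps power2_eq_square)
  then have tail_ge: "1 / 2 \<le> std_normal_tail (s - \<bar>m\<bar> / s)"
    using std_normal_tail_antimono std_normal_tail_0 by metis
  have "exp (s\<^sup>2 / 2 - \<bar>m\<bar>) * std_normal_tail (s - \<bar>m\<bar> / s) \<le> g s m"
    using g_eq_std_normal_tail[OF assms(1), of m]
      std_normal_tail_nonneg[of "s - m / s"] std_normal_tail_nonneg[of "s + m / s"]
    by (cases "0 \<le> m") simp_all
  moreover have "exp (s\<^sup>2 / 2 - \<bar>m\<bar>) / 2 \<le> exp (s\<^sup>2 / 2 - \<bar>m\<bar>) * std_normal_tail (s - \<bar>m\<bar> / s)"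
    using tail_ge by simp
  ultimately show ?thesis
    by linarith
qed

theorem lemma5:
  fixes \<sigma> \<mu> :: real
  assumes "\<sigma> > 0" and "\<bar>\<mu>\<bar> \<ge> r \<sigma>"
  shows "q \<sigma> \<mu> \<ge> (1/4) * \<sigma> * l_exp \<mu> \<and> (1/4) * \<sigma> * l_exp \<mu> > 0"
proof -
  define K where "K = exp (\<sigma>\<^sup>2 / 2 - \<bar>\<mu>\<bar>)"
  have "std_normal_density (\<mu> / \<sigma>) = K * std_normal_density (\<sigma> - \<bar>\<mu>\<bar> / \<sigma>)"
    using exp_mult_std_normal_density_shift[of \<sigma> "\<bar>\<mu>\<bar>"] std_normal_density_minus[of "\<mu> / \<sigma>"]
      assms(1) unfolding K_def by (cases "0 \<le> \<mu>") simp_all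
  also have "\<dots> \<le> K * (\<sigma> / 8)"
    using std_normal_density_le_if_r_le[OF assms] unfolding K_def by simp
  finally have density_le: "std_normal_density (\<mu> / \<sigma>) \<le> \<sigma> * K / 8"
    by (simp add: mult.commute)
  have "K / 2 \<le> g \<sigma> \<mu>"
    using g_lower_bound[OF assms(1)] sq_le_r[OF assms(1)] assms(2) unfolding K_def by simp
  then have "\<sigma> * (K / 2) \<le> \<sigma> * g \<sigma> \<mu>"
    using assms(1) by simp
  with density_le have "\<sigma> * K / 4 \<le> q \<sigma> \<mu>"
    unfolding q_eq_g[OF assms(1)] by linarith
  moreover have "\<sigma> * l_exp \<mu> \<le> \<sigma> * K"
    using assms(1) unfolding K_def l_exp_def by simp
  moreover have "0 < \<sigma> * l_exp \<mu>"
    using assms(1) unfolding l_exp_def by simp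
  ultimately show ?thesis
    by simp
qed

end
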